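(* Let $\mathcal{X}$ be a compact metric space and $k:\mathcal{X}^2\to\mathbb{R}$ a continuous, universal kernel with $\sup_{x\in\mathcal{X}}\sqrt{k(x,x)}\le K<\infty$, with RKHS $\mathcal{H}$. Let $P$ be a probability distribution on $\mathcal{X}\times\{+1,-1\}$ such that for some $\varepsilon>0$, $P(\{x:\varepsilon\le P(+1|x)\le 1-\varepsilon\})>0$. Let $\ell:\mathbb{R}\to\mathbb{R}$ be non-decreasing, convex and non-negative with the property that for every $M>0$ there is $z_0$ such that $g\ge M$ for all $z\ge z_0$ and all $g\in\partial\ell(z)$. For measurable $f$ and $\rho\in\mathbb{R}$ let $\mathcal{R}(f,\rho)=-2\rho+\mathbb{E}_P[\ell(\rho-yf(x))]$, $\mathcal{R}^*=\inf\{\mathcal{R}(f,\rho):f\in L_0(\mathcal{X}),\rho\in\mathbb{R}\}$, and for $\lambda>0$, $\mathcal{R}_\lambda(f,\rho)=\mathcal{R}(f,\rho)+\theta(\|f\|_{\mathcal{H}}^2\le\lambda^2)$, where $\theta(A)=0$ if $A$ is true and $\infty$ otherwise. Then $$\lim_{\lambda\to\infty}\inf\{\mathcal{R}_\lambda(f,\rho):f\in\mathcal{H},\rho\in\mathbb{R}\}=\mathcal{R}^*.$$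
   Context: A kernel is universal if its RKHS is dense in the continuous functions on $\mathcal{X}$ in supremum norm. $L_0(\mathcal{X})$ is the set of measurable functions on $\mathcal{X}$; $\partial\ell$ is the subdifferential. *)

theory Defs
  imports "HOL-Probability.Probability"
begin

definition is_kernel :: "('a \<Rightarrow> 'a \<Rightarrow> real) \<Rightarrow> bool" where
  "is_kernel k \<longleftrightarrow> (\<forall>x y. k x y = k y x) \<and>
     (\<forall>n (c::nat \<Rightarrow> real) (xs::nat \<Rightarrow> 'a).
        (\<Sum>i<n. \<Sum>j<n. c i * c j * k (xs i) (xs j)) \<ge> 0)"

definition is_RKHS :: "('a \<Rightarrow> 'a \<Rightarrow> real) \<Rightarrow> ('a \<Rightarrow> real) set
    \<Rightarrow> (('a \<Rightarrow> real) \<Rightarrow> ('a \<Rightarrow> real) \<Rightarrow> real) \<Rightarrow> bool" where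
  "is_RKHS k H ip \<longleftrightarrow>
     (\<lambda>x. 0) \<in> H \<and>
     (\<forall>f\<in>H. \<forall>g\<in>H. (\<lambda>x. f x + g x) \<in> H) \<and>
     (\<forall>c. \<forall>f\<in>H. (\<lambda>x. c * f x) \<in> H) \<and>
     (\<forall>f\<in>H. \<forall>g\<in>H. ip f g = ip g f) \<and>
     (\<forall>f\<in>H. \<forall>g\<in>H. \<forall>h\<in>H. ip (\<lambda>x. f x + g x) h = ip f h + ip g h) \<and>
     (\<forall>c. \<forall>f\<in>H. \<forall>g\<in>H. ip (\<lambda>x. c * f x) g = c * ip f g) \<and>
     (\<forall>f\<in>H. ip f f \<ge> 0) \<and>
     (\<forall>f\<in>H. ip f f = 0 \<longrightarrow> f = (\<lambda>x. 0)) \<and>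
     (\<forall>F. (\<forall>n. F n \<in> H) \<and>
          (\<forall>e>0. \<exists>N. \<forall>m\<ge>N. \<forall>n\<ge>N.
              ip (\<lambda>x. F m x - F n x) (\<lambda>x. F m x - F n x) < e)
        \<longrightarrow> (\<exists>f\<in>H. (\<lambda>n. ip (\<lambda>x. F n x - f x) (\<lambda>x. F n x - f x)) \<longlonglongrightarrow> 0)) \<and>
     (\<forall>x. (\<lambda>y. k x y) \<in> H) \<and>
     (\<forall>f\<in>H. \<forall>x. f x = ip f (\<lambda>y. k x y))"

definition universal_RKHS :: "('a::topological_space \<Rightarrow> real) set \<Rightarrow> bool" where
  "universal_RKHS H \<longleftrightarrow>
     (\<forall>g. continuous_on UNIV g \<longrightarrow> (\<forall>e>0. \<exists>f\<in>H. \<forall>x. \<bar>f x - g x\<bar> \<le> e))"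

definition subdiff :: "(real \<Rightarrow> real) \<Rightarrow> real \<Rightarrow> real set" where
  "subdiff l z = {g. \<forall>w. l w \<ge> l z + g * (w - z)}"

definition lab :: "bool \<Rightarrow> real" where
  "lab b = (if b then 1 else -1)"

definition risk :: "('a \<times> bool) measure \<Rightarrow> (real \<Rightarrow> real) \<Rightarrow> ('a \<Rightarrow> real) \<Rightarrow> real \<Rightarrow> ereal" where
  "risk P l f \<rho> = ereal (-2 * \<rho>) +
     enn2ereal (\<integral>\<^sup>+ z. ennreal (l (\<rho> - lab (snd z) * f (fst z))) \<partial>P)"

definition theta :: "bool \<Rightarrow> ereal" where
  "theta A = (if A then 0 else \<infinity>)"

definition reg_risk :: "('a \<times> bool) measure \<Rightarrow> (real \<Rightarrow> real)
    \<Rightarrow> (('a \<Rightarrow> real) \<Rightarrow> ('a \<Rightarrow> real) \<Rightarrow> real) \<Rightarrow> real \<Rightarrow> ('a \<Rightarrow> real) \<Rightarrow> real \<Rightarrow> ereal" where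
  "reg_risk P l ip lam f \<rho> = risk P l f \<rho> + theta (ip f f \<le> lam\<^sup>2)"

end

theory Submission
  imports Defs
begin

text \<open>
  For a fixed \<open>f \<in> H\<close> the constraint \<open>\<parallel>f\<parallel>\<^sup>2 \<le> \<lambda>\<^sup>2\<close> is inactive once \<open>\<lambda>\<close> is large, so the
  regularized infima converge to the infimum of the risk over \<open>H\<close>. That this infimum equals the
  one over all measurable \<open>f\<close> is a density argument: truncate \<open>f\<close> at a level where the tail
  costs little, approximate the truncation in \<open>L\<^sup>1\<close> of the marginal distribution by a continuous
  function (finite Borel measures on metric spaces are regular, and Urysohn's lemma), and that
  uniformly by an element of \<open>H\<close> (universality). A monotone convex loss is Lipschitz on every
  half-line \<open>(-\<infinity>, b]\<close>, so the expected loss moves by at most a constant times the \<open>L\<^sup>1\<close> error.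
\<close>

section \<open>Regularity of finite Borel measures on metric spaces\<close>

definition regular_set :: "'a::metric_space measure \<Rightarrow> 'a set \<Rightarrow> bool" where
  "regular_set M A \<longleftrightarrow>
     (\<forall>d>0. \<exists>F U. closed F \<and> open U \<and> F \<subseteq> A \<and> A \<subseteq> U \<and> measure M (U - F) < d)"

lemma regular_setE:
  assumes "regular_set M A" "d > 0"
  obtains F U where "closed F" "open U" "F \<subseteq> A" "A \<subseteq> U" "measure M (U - F) < d"
proof -
  have "\<exists>F U. closed F \<and> open U \<and> F \<subseteq> A \<and> A \<subseteq> U \<and> measure M (U - F) < d"
    using assms unfolding regular_set_def by simp
  with that show ?thesis
    by blast
qed

lemma open_incseq_closedE:
  fixes A :: "'a::metric_space set"
  assumes "open A"
  obtains F where "incseq F" "\<And>n. closed (F n)" "(\<Union>n. F n) = A"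
proof (cases "A = UNIV")
  case True
  then show ?thesis
    by (intro that[of "\<lambda>_. UNIV"]) (auto simp: incseq_def)
next
  case False
  define F where "F n = {x. 1 / Suc n \<le> infdist x (-A)}" for n
  have "incseq F"
    unfolding F_def by (intro incseq_SucI) (auto elim!: order_trans[rotated] simp: frac_le)
  moreover have "closed (F n)" for n
    unfolding F_def by (intro closed_Collect_le continuous_intros) auto
  moreover have "(\<Union>n. F n) = A"
  proof (intro equalityI subsetI)
    fix x assume "x \<in> (\<Union>n. F n)"
    then have "infdist x (-A) \<noteq> 0"
      unfolding F_def by (smt (verit) UN_E of_nat_0_less_iff zero_less_Suc divide_pos_pos mem_Collect_eq)
    then show "x \<in> A"
      using infdist_zero[of x "-A"] by blast
  next
    fix x assume "x \<in> A"
    then have "0 < infdist x (-A)"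
      using False \<open>open A\<close> by (intro infdist_pos_not_in_closed) auto
    then obtain n where "1 / Suc n < infdist x (-A)"
      using nat_approx_posE by blast
    then show "x \<in> (\<Union>n. F n)"
      unfolding F_def by (auto intro!: exI[of _ n])
  qed
  ultimately show ?thesis
    by (rule that)
qed

lemma regular_set_open:
  fixes M :: "'a::metric_space measure"
  assumes "finite_measure M" "sets M = sets borel" "open A"
  shows "regular_set M A"
  unfolding regular_set_def
proof (intro allI impI)
  interpret finite_measure M by fact
  fix d :: real assume "d > 0"
  obtain F where F: "incseq F" "\<And>n. closed (F n)" "(\<Union>n. F n) = A"
    using open_incseq_closedE[OF assms(3)] by blast
  then have "(\<lambda>n. measure M (F n)) \<longlonglongrightarrow> measure M A"
    using finite_Lim_measure_incseq[of F] assms(2) by (auto intro: borel_closed)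
  from LIMSEQ_D[OF this \<open>d > 0\<close>] obtain n where "\<bar>measure M (F n) - measure M A\<bar> < d"
    by auto
  moreover have "F n \<subseteq> A"
    using F(3) by blast
  moreover have "measure M (A - F n) = measure M A - measure M (F n)"
    using \<open>F n \<subseteq> A\<close> F(2) assms(2,3) by (intro finite_measure_Diff) auto
  ultimately show "\<exists>F U. closed F \<and> open U \<and> F \<subseteq> A \<and> A \<subseteq> U \<and> measure M (U - F) < d"
    using F(2) \<open>open A\<close> by (intro exI[of _ "F n"] exI[of _ A]) auto
qed

lemma regular_set_Compl:
  assumes "regular_set M A"
  shows "regular_set M (-A)"
  unfolding regular_set_def
proof (intro allI impI)
  fix d :: real assume "d > 0"
  with assms obtain F U where FU: "closed F" "open U" "F \<subseteq> A" "A \<subseteq> U" "measure M (U - F) < d"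
    by (rule regular_setE)
  have "-F - -U = U - F"
    by blast
  with FU(5) have "measure M (-F - -U) < d"
    by simp
  moreover have "closed (-U)" "open (-F)" "-U \<subseteq> -A" "-A \<subseteq> -F"
    using FU(1-4) by (auto simp: closed_Compl open_Compl)
  ultimately show "\<exists>F U. closed F \<and> open U \<and> F \<subseteq> -A \<and> -A \<subseteq> U \<and> measure M (U - F) < d"
    by blast
qed

lemma finite_measure_UN_minus_initial_small:
  fixes A :: "nat \<Rightarrow> 'a set"
  assumes "finite_measure M" "range A \<subseteq> sets M" "d > 0"
  obtains N where "measure M ((\<Union>i. A i) - (\<Union>i<N. A i)) < d"
proof -
  interpret finite_measure M by fact
  have "incseq (\<lambda>N. \<Union>i<N. A i)"
    unfolding incseq_def by (auto intro: less_le_trans)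
  moreover have "(\<Union>N. \<Union>i<N. A i) = (\<Union>i. A i)"
    by blast
  moreover have "range (\<lambda>N. \<Union>i<N. A i) \<subseteq> sets M"
    using assms(2) by auto
  ultimately have "(\<lambda>N. measure M (\<Union>i<N. A i)) \<longlonglongrightarrow> measure M (\<Union>i. A i)"
    using finite_Lim_measure_incseq[of "\<lambda>N. \<Union>i<N. A i"] by auto
  then obtain N where "\<bar>measure M (\<Union>i<N. A i) - measure M (\<Union>i. A i)\<bar> < d"
    using LIMSEQ_D[of _ _ d] assms(3) by (force simp: dist_real_def)
  moreover have "measure M ((\<Union>i. A i) - (\<Union>i<N. A i)) = measure M (\<Union>i. A i) - measure M (\<Union>i<N. A i)"
    using assms(2) by (intro finite_measure_Diff) auto
  ultimately show ?thesis
    by (intro that[of N]) linarith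
qed

lemma regular_set_sequenceE:
  assumes "\<And>i. regular_set M (A i)" "\<And>i. e i > 0"
  obtains F U where "\<And>i. closed (F i)" "\<And>i. open (U i)" "\<And>i. F i \<subseteq> A i" "\<And>i. A i \<subseteq> U i"
    "\<And>i. measure M (U i - F i) < e i"
proof -
  have "\<forall>i. \<exists>F U. closed F \<and> open U \<and> F \<subseteq> A i \<and> A i \<subseteq> U \<and> measure M (U - F) < e i"
    using assms unfolding regular_set_def by simp
  from choice[OF this] obtain F where "\<forall>i. \<exists>U. closed (F i) \<and> open U \<and> F i \<subseteq> A i \<and> A i \<subseteq> U
      \<and> measure M (U - F i) < e i" ..
  from choice[OF this] obtain U where "\<forall>i. closed (F i) \<and> open (U i) \<and> F i \<subseteq> A i \<and> A i \<subseteq> U i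
      \<and> measure M (U i - F i) < e i" ..
  then show ?thesis
    by (intro that[of F U]) simp_all
qed

lemma finite_measure_UN_le_sums:
  fixes X :: "nat \<Rightarrow> 'a set"
  assumes "finite_measure M" "range X \<subseteq> sets M" "\<And>i. measure M (X i) < e i" "e sums s"
  shows "measure M (\<Union>i. X i) \<le> s"
proof -
  interpret finite_measure M by fact
  have "summable (\<lambda>i. measure M (X i))"
  proof (rule summable_comparison_test)
    show "summable e"
      using assms(4) by (rule sums_summable)
    show "\<exists>N. \<forall>n\<ge>N. norm (measure M (X n)) \<le> e n"
      using assms(3) by (auto intro: less_imp_le)
  qed
  then have "measure M (\<Union>i. X i) \<le> (\<Sum>i. measure M (X i))"
    using assms(2) by (intro finite_measure_subadditive_countably) auto
  also have "\<dots> \<le> (\<Sum>i. e i)"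
    using \<open>summable _\<close> assms(3,4) by (intro suminf_le) (auto simp: sums_iff less_imp_le)
  finally show ?thesis
    using assms(4) by (simp add: sums_iff)
qed

lemma regular_set_UN:
  fixes M :: "'a::metric_space measure" and A :: "nat \<Rightarrow> 'a set"
  assumes fin: "finite_measure M" and M_borel: "sets M = sets borel"
    and A: "\<And>i. regular_set M (A i)"
  shows "regular_set M (\<Union>i. A i)"
  unfolding regular_set_def
proof (intro allI impI)
  interpret finite_measure M by fact
  fix d :: real assume "d > 0"
  define e where "e i = d / 2 * (1/2) ^ Suc i" for i :: nat
  have e_pos: "e i > 0" for i
    using \<open>d > 0\<close> by (simp add: e_def)
  obtain F U where FU: "\<And>i. closed (F i)" "\<And>i. open (U i)" "\<And>i. F i \<subseteq> A i"
      "\<And>i. A i \<subseteq> U i" "\<And>i. measure M (U i - F i) < e i"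
    using regular_set_sequenceE[where A = A and e = e, OF A e_pos] by blast
  have sets_F: "range F \<subseteq> sets M"
    unfolding M_borel using FU(1) by (auto intro: borel_closed)
  have sets_UF: "range (\<lambda>i. U i - F i) \<subseteq> sets M"
    unfolding M_borel using FU(1,2) by (auto intro: sets.Diff borel_open borel_closed)
  have "e sums (d / 2)"
    unfolding e_def using sums_mult[OF power_half_series, of "d / 2"] by simp
  with sets_UF FU(5) have small_gaps: "measure M (\<Union>i. U i - F i) \<le> d / 2"
    by (intro finite_measure_UN_le_sums[OF fin])
  obtain N where small_tail: "measure M ((\<Union>i. F i) - (\<Union>i<N. F i)) < d / 2"
    using finite_measure_UN_minus_initial_small[OF fin sets_F, of "d / 2"] \<open>d > 0\<close> by auto
  have sets_gaps: "(\<Union>i. U i - F i) \<in> sets M" and sets_tail: "(\<Union>i. F i) - (\<Union>i<N. F i) \<in> sets M"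
    using sets_UF sets_F by (auto intro!: sets.Diff sets.countable_UN' sets.finite_UN)
  have "(\<Union>i. U i) - (\<Union>i<N. F i) \<subseteq> (\<Union>i. U i - F i) \<union> ((\<Union>i. F i) - (\<Union>i<N. F i))"
    by blast
  then have "measure M ((\<Union>i. U i) - (\<Union>i<N. F i))
      \<le> measure M ((\<Union>i. U i - F i) \<union> ((\<Union>i. F i) - (\<Union>i<N. F i)))"
    using sets_gaps sets_tail by (intro finite_measure_mono) auto
  also have "\<dots> \<le> measure M (\<Union>i. U i - F i) + measure M ((\<Union>i. F i) - (\<Union>i<N. F i))"
    using sets_gaps sets_tail by (rule measure_Un_le)
  finally have "measure M ((\<Union>i. U i) - (\<Union>i<N. F i)) < d"
    using small_gaps small_tail by linarith
  moreover have "closed (\<Union>i<N. F i)" "open (\<Union>i. U i)"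
    using FU(1,2) by auto
  moreover have "(\<Union>i<N. F i) \<subseteq> (\<Union>i. A i)" "(\<Union>i. A i) \<subseteq> (\<Union>i. U i)"
    using FU(3,4) by blast+
  ultimately show "\<exists>F U. closed F \<and> open U \<and> F \<subseteq> (\<Union>i. A i) \<and> (\<Union>i. A i) \<subseteq> U \<and> measure M (U - F) < d"
    by blast
qed

lemma regular_set_borel:
  fixes M :: "'a::metric_space measure"
  assumes "finite_measure M" "sets M = sets borel" "A \<in> sets borel"
  shows "regular_set M A"
proof -
  have "A \<in> sigma_sets UNIV {S. open S}"
    using assms(3) unfolding sets_borel .
  then show ?thesis
  proof induction
    case (Union A)
    then show ?case
      using regular_set_UN[OF assms(1,2), of A] by simp
  qed (use regular_set_open[OF assms(1,2)] regular_set_Compl in \<open>auto simp: Compl_eq_Diff_UNIV[symmetric]\<close>)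
qed

section \<open>Density of continuous functions in \<open>L\<^sup>1\<close>\<close>

definition L1_approximable :: "'a::metric_space measure \<Rightarrow> ('a \<Rightarrow> real) \<Rightarrow> bool" where
  "L1_approximable M f \<longleftrightarrow>
     (\<forall>d>0. \<exists>g. continuous_on UNIV g \<and> (\<integral>\<^sup>+x. ennreal \<bar>f x - g x\<bar> \<partial>M) < ennreal d)"

lemma borel_measurable_abs_diff:
  fixes M :: "'a::metric_space measure"
  assumes "sets M = sets borel" "f \<in> borel_measurable borel" "g \<in> borel_measurable borel"
  shows "(\<lambda>x. ennreal \<bar>f x - g x\<bar>) \<in> borel_measurable M"
proof -
  have "(\<lambda>x. ennreal \<bar>f x - g x\<bar>) \<in> borel_measurable borel"
    using assms(2,3) by measurable
  then show ?thesis
    using measurable_cong_sets[OF assms(1) refl] by blast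
qed

lemma metric_Urysohn:
  fixes F U :: "'a::metric_space set"
  assumes "closed F" "open U" "F \<subseteq> U"
  obtains g :: "'a \<Rightarrow> real" where "continuous_on UNIV g" "\<And>x. 0 \<le> g x \<and> g x \<le> 1"
    "\<And>x. x \<in> F \<Longrightarrow> g x = 1" "\<And>x. x \<notin> U \<Longrightarrow> g x = 0"
proof -
  have "normal_space (euclidean :: 'a topology)"
    by (simp add: metrizable_imp_normal_space metrizable_space_euclidean)
  moreover have "disjnt (-U) F"
    using assms(3) by (auto simp: disjnt_def)
  ultimately obtain g where g: "continuous_map euclidean (top_of_set {0..1::real}) g"
      "g ` (-U) \<subseteq> {0}" "g ` F \<subseteq> {1}"
    using Urysohn_lemma[of euclidean "-U" F 0 1] assms(1,2) by (auto simp: closed_Compl)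
  then have "continuous_map euclidean euclidean g" "\<And>x. g x \<in> {0..1}"
    by (auto simp: continuous_map_in_subtopology Pi_iff)
  with g(2,3) show ?thesis
    by (intro that[of g]) (auto simp: continuous_map_iff_continuous2)
qed

lemma L1_approximable_indicator:
  fixes M :: "'a::metric_space measure"
  assumes "finite_measure M" "sets M = sets borel" "A \<in> sets borel"
  shows "L1_approximable M (indicator A)"
  unfolding L1_approximable_def
proof (intro allI impI)
  interpret finite_measure M by fact
  fix d :: real assume "d > 0"
  with regular_set_borel[OF assms] obtain F U
    where FU: "closed F" "open U" "F \<subseteq> A" "A \<subseteq> U" "measure M (U - F) < d"
    by (rule regular_setE)
  then obtain g :: "'a \<Rightarrow> real" where g: "continuous_on UNIV g" "\<And>x. 0 \<le> g x \<and> g x \<le> 1"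
      "\<And>x. x \<in> F \<Longrightarrow> g x = 1" "\<And>x. x \<notin> U \<Longrightarrow> g x = 0"
    using metric_Urysohn[OF FU(1,2) order.trans[OF FU(3,4)]] by blast
  have "ennreal \<bar>indicator A x - g x\<bar> \<le> indicator (U - F) x" for x
  proof (cases "x \<in> U - F")
    case True
    then show ?thesis
      using g(2)[of x] by (auto simp: indicator_def)
  next
    case False
    then have "\<bar>indicator A x - g x\<bar> = 0"
      using g(3,4)[of x] FU(3,4) by (auto simp: indicator_def)
    then show ?thesis
      by simp
  qed
  then have "(\<integral>\<^sup>+x. ennreal \<bar>indicator A x - g x\<bar> \<partial>M) \<le> (\<integral>\<^sup>+x. indicator (U - F) x \<partial>M)"
    by (intro nn_integral_mono)
  also have "\<dots> = emeasure M (U - F)"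
    using FU(1,2) assms(2) by (intro nn_integral_indicator) auto
  also have "\<dots> < ennreal d"
    using FU(5) \<open>d > 0\<close> by (simp add: emeasure_eq_measure ennreal_lessI)
  finally show "\<exists>g. continuous_on UNIV g \<and> (\<integral>\<^sup>+x. ennreal \<bar>indicator A x - g x\<bar> \<partial>M) < ennreal d"
    using g(1) by blast
qed

lemma L1_approximable_add:
  fixes M :: "'a::metric_space measure"
  assumes M: "sets M = sets borel"
    and f: "f \<in> borel_measurable borel" "L1_approximable M f"
    and h: "h \<in> borel_measurable borel" "L1_approximable M h"
  shows "L1_approximable M (\<lambda>x. f x + h x)"
  unfolding L1_approximable_def
proof (intro allI impI)
  fix d :: real assume "d > 0"
  then obtain g1 g2 where g1: "continuous_on UNIV g1" "(\<integral>\<^sup>+x. ennreal \<bar>f x - g1 x\<bar> \<partial>M) < ennreal (d/2)"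
    and g2: "continuous_on UNIV g2" "(\<integral>\<^sup>+x. ennreal \<bar>h x - g2 x\<bar> \<partial>M) < ennreal (d/2)"
    using f(2) h(2) unfolding L1_approximable_def by (meson half_gt_zero)
  have "(\<integral>\<^sup>+x. ennreal \<bar>(f x + h x) - (g1 x + g2 x)\<bar> \<partial>M)
      \<le> (\<integral>\<^sup>+x. ennreal \<bar>f x - g1 x\<bar> + ennreal \<bar>h x - g2 x\<bar> \<partial>M)"
  proof (intro nn_integral_mono)
    fix x
    have "\<bar>(f x + h x) - (g1 x + g2 x)\<bar> \<le> \<bar>f x - g1 x\<bar> + \<bar>h x - g2 x\<bar>"
      by linarith
    then show "ennreal \<bar>(f x + h x) - (g1 x + g2 x)\<bar> \<le> ennreal \<bar>f x - g1 x\<bar> + ennreal \<bar>h x - g2 x\<bar>"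
      by (simp add: ennreal_leI flip: ennreal_plus)
  qed
  also have "\<dots> = (\<integral>\<^sup>+x. ennreal \<bar>f x - g1 x\<bar> \<partial>M) + (\<integral>\<^sup>+x. ennreal \<bar>h x - g2 x\<bar> \<partial>M)"
    using g1(1) g2(1)
    by (intro nn_integral_add borel_measurable_abs_diff[OF M] f(1) h(1) borel_measurable_continuous_onI)
  also have "\<dots> < ennreal (d/2 + d/2)"
    using g1(2) g2(2) by (rule add_mono_ennreal)
  finally show "\<exists>g. continuous_on UNIV g \<and> (\<integral>\<^sup>+x. ennreal \<bar>f x + h x - g x\<bar> \<partial>M) < ennreal d"
    using g1(1) g2(1) by (intro exI[of _ "\<lambda>x. g1 x + g2 x"]) (auto intro: continuous_on_add)
qed

lemma L1_approximable_cmult: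
  fixes M :: "'a::metric_space measure"
  assumes M: "sets M = sets borel" and f: "f \<in> borel_measurable borel" "L1_approximable M f"
  shows "L1_approximable M (\<lambda>x. c * f x)"
  unfolding L1_approximable_def
proof (intro allI impI)
  fix d :: real assume "d > 0"
  then have "d / (\<bar>c\<bar> + 1) > 0"
    by simp
  then obtain g where g: "continuous_on UNIV g"
      "(\<integral>\<^sup>+x. ennreal \<bar>f x - g x\<bar> \<partial>M) < ennreal (d / (\<bar>c\<bar> + 1))"
    using f(2) unfolding L1_approximable_def by blast
  have "(\<integral>\<^sup>+x. ennreal \<bar>c * f x - c * g x\<bar> \<partial>M) \<le> (\<integral>\<^sup>+x. ennreal (\<bar>c\<bar> + 1) * ennreal \<bar>f x - g x\<bar> \<partial>M)"
  proof (intro nn_integral_mono)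
    fix x
    have "\<bar>c * f x - c * g x\<bar> \<le> (\<bar>c\<bar> + 1) * \<bar>f x - g x\<bar>"
      by (simp add: abs_mult mult_right_mono flip: right_diff_distrib)
    then have "ennreal \<bar>c * f x - c * g x\<bar> \<le> ennreal ((\<bar>c\<bar> + 1) * \<bar>f x - g x\<bar>)"
      by (rule ennreal_leI)
    also have "\<dots> = ennreal (\<bar>c\<bar> + 1) * ennreal \<bar>f x - g x\<bar>"
      by (rule ennreal_mult) auto
    finally show "ennreal \<bar>c * f x - c * g x\<bar> \<le> ennreal (\<bar>c\<bar> + 1) * ennreal \<bar>f x - g x\<bar>" .
  qed
  also have "\<dots> = ennreal (\<bar>c\<bar> + 1) * (\<integral>\<^sup>+x. ennreal \<bar>f x - g x\<bar> \<partial>M)"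
    using g(1) by (intro nn_integral_cmult borel_measurable_abs_diff[OF M] f(1) borel_measurable_continuous_onI)
  also have "\<dots> < ennreal (\<bar>c\<bar> + 1) * ennreal (d / (\<bar>c\<bar> + 1))"
    using g(2) by (intro ennreal_mult_strict_left_mono) (auto intro: add_nonneg_pos)
  also have "\<dots> = ennreal ((\<bar>c\<bar> + 1) * (d / (\<bar>c\<bar> + 1)))"
    using \<open>d > 0\<close> by (intro ennreal_mult[symmetric]) auto
  also have "\<dots> = ennreal d"
    by simp
  finally show "\<exists>g. continuous_on UNIV g \<and> (\<integral>\<^sup>+x. ennreal \<bar>c * f x - g x\<bar> \<partial>M) < ennreal d"
    using g(1) by (intro exI[of _ "\<lambda>x. c * g x"]) (auto intro: continuous_on_mult continuous_on_const)
qed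

lemma L1_approximable_sum:
  fixes M :: "'a::metric_space measure"
  assumes M: "sets M = sets borel" and "finite S"
    and "\<And>v. v \<in> S \<Longrightarrow> h v \<in> borel_measurable borel \<and> L1_approximable M (h v)"
  shows "L1_approximable M (\<lambda>x. \<Sum>v\<in>S. h v x)"
  using assms(2,3)
proof (induction S rule: finite_induct)
  case empty
  show ?case
    unfolding L1_approximable_def by (auto intro!: exI[of _ "\<lambda>x. 0"])
next
  case (insert v S)
  then have "L1_approximable M (\<lambda>x. h v x + (\<Sum>v\<in>S. h v x))"
    by (intro L1_approximable_add[OF M] borel_measurable_sum) auto
  with insert.hyps show ?case
    by simp
qed

lemma L1_approximable_finite_range:
  fixes M :: "'a::metric_space measure"
  assumes "finite_measure M" "sets M = sets borel"
    and f: "f \<in> borel_measurable borel" "finite (range f)"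
  shows "L1_approximable M f"
proof -
  have level_sets: "f -` {v} \<in> sets borel" for v
    using measurable_sets[OF f(1), of "{v}"] by simp
  have level_set_sum: "f = (\<lambda>x. \<Sum>v\<in>range f. v * indicator (f -` {v}) x)"
  proof
    fix x
    have "(\<Sum>v\<in>range f. v * indicator (f -` {v}) x) = (\<Sum>v\<in>range f. if f x = v then v else 0)"
      by (intro sum.cong) (auto simp: indicator_def)
    then show "f x = (\<Sum>v\<in>range f. v * indicator (f -` {v}) x)"
      using f(2) by simp
  qed
  show ?thesis
    using level_sets L1_approximable_indicator[OF assms(1,2)] L1_approximable_cmult[OF assms(2)]
    by (subst level_set_sum, intro L1_approximable_sum[OF assms(2) f(2)]) auto
qed

lemma L1_approximable_uniform_limit:
  fixes M :: "'a::metric_space measure"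
  assumes fin: "finite_measure M" and M: "sets M = sets borel"
    and approx: "\<And>e. e > 0 \<Longrightarrow>
        \<exists>t. t \<in> borel_measurable borel \<and> L1_approximable M t \<and> (\<forall>x. \<bar>f x - t x\<bar> \<le> e)"
  shows "L1_approximable M f"
  unfolding L1_approximable_def
proof (intro allI impI)
  interpret finite_measure M by fact
  fix d :: real assume "d > 0"
  define m where "m = measure M (space M)"
  define e where "e = d / (2 * (m + 1))"
  have "m \<ge> 0"
    by (simp add: m_def)
  then have "e > 0"
    using \<open>d > 0\<close> by (simp add: e_def)
  have "e * m < d / 2"
    using \<open>d > 0\<close> \<open>m \<ge> 0\<close> by (simp add: e_def field_simps)
  have integral_e: "(\<integral>\<^sup>+x. ennreal e \<partial>M) = ennreal (e * m)"
    using \<open>e > 0\<close> \<open>m \<ge> 0\<close> by (simp add: emeasure_eq_measure m_def ennreal_mult)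
  obtain t where t: "t \<in> borel_measurable borel" "L1_approximable M t" "\<And>x. \<bar>f x - t x\<bar> \<le> e"
    using approx[OF \<open>e > 0\<close>] by blast
  obtain g where g: "continuous_on UNIV g" "(\<integral>\<^sup>+x. ennreal \<bar>t x - g x\<bar> \<partial>M) < ennreal (d/2)"
    using t(2) \<open>d > 0\<close> unfolding L1_approximable_def by (meson half_gt_zero)
  have "(\<integral>\<^sup>+x. ennreal \<bar>f x - g x\<bar> \<partial>M) \<le> (\<integral>\<^sup>+x. ennreal e + ennreal \<bar>t x - g x\<bar> \<partial>M)"
  proof (intro nn_integral_mono)
    fix x
    have "\<bar>f x - g x\<bar> \<le> e + \<bar>t x - g x\<bar>"
      using t(3)[of x] by linarith
    then show "ennreal \<bar>f x - g x\<bar> \<le> ennreal e + ennreal \<bar>t x - g x\<bar>"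
      using \<open>e > 0\<close> by (simp add: ennreal_leI flip: ennreal_plus)
  qed
  also have "\<dots> = (\<integral>\<^sup>+x. ennreal e \<partial>M) + (\<integral>\<^sup>+x. ennreal \<bar>t x - g x\<bar> \<partial>M)"
    using g(1) by (intro nn_integral_add borel_measurable_abs_diff[OF M] t(1) borel_measurable_continuous_onI) auto
  also have "\<dots> < ennreal (d/2 + d/2)"
    unfolding integral_e using \<open>e * m < d / 2\<close> g(2) \<open>d > 0\<close> by (intro add_mono_ennreal ennreal_lessI) auto
  finally show "\<exists>g. continuous_on UNIV g \<and> (\<integral>\<^sup>+x. ennreal \<bar>f x - g x\<bar> \<partial>M) < ennreal d"
    using g(1) by auto
qed

lemma L1_approximable_bounded:
  fixes M :: "'a::metric_space measure"
  assumes "finite_measure M" "sets M = sets borel"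
    and f: "f \<in> borel_measurable borel" "\<And>x. \<bar>f x\<bar> \<le> T"
  shows "L1_approximable M f"
proof (rule L1_approximable_uniform_limit[OF assms(1,2)])
  fix e :: real assume "e > 0"
  then obtain n :: nat where "1 / Suc n < e"
    using nat_approx_posE by blast
  define N where "N = real (Suc n)"
  have "N > 0"
    by (simp add: N_def)
  define t where "t x = \<lfloor>f x * N\<rfloor> / N" for x
  have "range t \<subseteq> (\<lambda>k. k / N) ` {\<lfloor>- T * N\<rfloor> .. \<lfloor>T * N\<rfloor>}"
  proof safe
    fix x
    have "- T \<le> f x" "f x \<le> T"
      using f(2)[of x] by auto
    then have "- T * N \<le> f x * N" "f x * N \<le> T * N"
      using mult_right_mono[of "- T" "f x" N] mult_right_mono[of "f x" T N] \<open>N > 0\<close> by auto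
    then show "t x \<in> (\<lambda>k. k / N) ` {\<lfloor>- T * N\<rfloor> .. \<lfloor>T * N\<rfloor>}"
      unfolding t_def by (intro image_eqI[OF refl]) (auto intro: floor_mono)
  qed
  then have "finite (range t)"
    by (rule finite_subset) auto
  moreover have "t \<in> borel_measurable borel"
    unfolding t_def using f(1) by measurable
  moreover have "\<bar>f x - t x\<bar> \<le> e" for x
  proof -
    have "\<lfloor>f x * N\<rfloor> \<le> f x * N" "f x * N < \<lfloor>f x * N\<rfloor> + 1"
      by linarith+
    then have "t x \<le> f x" "f x < t x + 1 / N"
      using \<open>N > 0\<close> unfolding t_def by (simp_all add: field_simps)
    then show ?thesis
      using \<open>1 / Suc n < e\<close> by (simp add: N_def)
  qed
  ultimately show "\<exists>t. t \<in> borel_measurable borel \<and> L1_approximable M t \<and> (\<forall>x. \<bar>f x - t x\<bar> \<le> e)"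
    using L1_approximable_finite_range[OF assms(1,2)] by blast
qed

lemma bounded_L1_approx_by_bounded_continuous:
  fixes M :: "'a::metric_space measure"
  assumes "finite_measure M" "sets M = sets borel"
    and f: "f \<in> borel_measurable borel" "\<And>x. \<bar>f x\<bar> \<le> T" and "d > 0"
  obtains g where "continuous_on UNIV g" "\<And>x. \<bar>g x\<bar> \<le> T"
    "(\<integral>\<^sup>+x. ennreal \<bar>f x - g x\<bar> \<partial>M) < ennreal d"
proof -
  obtain g where g: "continuous_on UNIV g" "(\<integral>\<^sup>+x. ennreal \<bar>f x - g x\<bar> \<partial>M) < ennreal d"
    using L1_approximable_bounded[OF assms(1-4)] \<open>d > 0\<close> unfolding L1_approximable_def by blast
  define g' where "g' x = max (- T) (min T (g x))" for x
  have "\<bar>f x - g' x\<bar> \<le> \<bar>f x - g x\<bar>" for x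
    using f(2)[of x] unfolding g'_def by auto
  then have "(\<integral>\<^sup>+x. ennreal \<bar>f x - g' x\<bar> \<partial>M) \<le> (\<integral>\<^sup>+x. ennreal \<bar>f x - g x\<bar> \<partial>M)"
    by (intro nn_integral_mono ennreal_leI)
  moreover have "continuous_on UNIV g'"
    unfolding g'_def by (intro continuous_intros g(1))
  moreover have "\<bar>g' x\<bar> \<le> T" for x
    using f(2)[of x] unfolding g'_def by auto
  ultimately show ?thesis
    using g(2) by (intro that[of g']) auto
qed

section \<open>Continuity of the functions in a reproducing kernel Hilbert space\<close>

lemma is_RKHSD:
  assumes "is_RKHS k H ip"
  shows is_RKHS_add: "\<And>f g. f \<in> H \<Longrightarrow> g \<in> H \<Longrightarrow> (\<lambda>x. f x + g x) \<in> H"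
    and is_RKHS_scale: "\<And>c f. f \<in> H \<Longrightarrow> (\<lambda>x. c * f x) \<in> H"
    and is_RKHS_ip_commute: "\<And>f g. f \<in> H \<Longrightarrow> g \<in> H \<Longrightarrow> ip f g = ip g f"
    and is_RKHS_ip_add: "\<And>f g h. f \<in> H \<Longrightarrow> g \<in> H \<Longrightarrow> h \<in> H \<Longrightarrow> ip (\<lambda>x. f x + g x) h = ip f h + ip g h"
    and is_RKHS_ip_scale: "\<And>c f g. f \<in> H \<Longrightarrow> g \<in> H \<Longrightarrow> ip (\<lambda>x. c * f x) g = c * ip f g"
    and is_RKHS_ip_nonneg: "\<And>f. f \<in> H \<Longrightarrow> ip f f \<ge> 0"
    and is_RKHS_kernel_section: "\<And>x. (\<lambda>y. k x y) \<in> H"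
    and is_RKHS_reproducing: "\<And>f x. f \<in> H \<Longrightarrow> f x = ip f (\<lambda>y. k x y)"
  using assms unfolding is_RKHS_def by blast+

lemma nonneg_quadratic_discriminant:
  fixes a b c :: real
  assumes "a \<ge> 0" and nonneg: "\<And>t. 0 \<le> c + 2 * t * b + t\<^sup>2 * a"
  shows "b\<^sup>2 \<le> c * a"
proof (cases "a = 0")
  case True
  have "b = 0"
  proof (rule ccontr)
    assume "b \<noteq> 0"
    then have "c + 2 * (- (\<bar>c\<bar> + 1) / (2 * b)) * b = c - (\<bar>c\<bar> + 1)"
      by (simp add: field_simps)
    then show False
      using nonneg[of "- (\<bar>c\<bar> + 1) / (2 * b)"] True by simp
  qed
  with True show ?thesis
    by simp
next
  case False
  with \<open>a \<ge> 0\<close> have "a > 0"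
    by simp
  have "0 \<le> c + 2 * (- b / a) * b + (- b / a)\<^sup>2 * a"
    by (rule nonneg)
  also have "\<dots> = c - b\<^sup>2 / a"
    using \<open>a > 0\<close> by (simp add: field_simps power2_eq_square)
  finally have "b\<^sup>2 / a \<le> c"
    by simp
  with \<open>a > 0\<close> show ?thesis
    by (simp add: divide_le_eq)
qed

lemma RKHS_Cauchy_Schwarz:
  assumes R: "is_RKHS k H ip" and "f \<in> H" "g \<in> H"
  shows "(ip f g)\<^sup>2 \<le> ip f f * ip g g"
proof (rule nonneg_quadratic_discriminant)
  show "0 \<le> ip g g"
    using is_RKHS_ip_nonneg[OF R \<open>g \<in> H\<close>] .
  fix t
  have tg: "(\<lambda>x. t * g x) \<in> H"
    using is_RKHS_scale[OF R \<open>g \<in> H\<close>] .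
  let ?u = "\<lambda>x. f x + t * g x"
  have "?u \<in> H"
    using is_RKHS_add[OF R \<open>f \<in> H\<close> tg] .
  have "ip ?u ?u = ip f ?u + t * ip g ?u"
    using is_RKHS_ip_add[OF R \<open>f \<in> H\<close> tg \<open>?u \<in> H\<close>] is_RKHS_ip_scale[OF R \<open>g \<in> H\<close> \<open>?u \<in> H\<close>]
    by simp
  also have "ip f ?u = ip f f + t * ip f g"
    using is_RKHS_ip_commute[OF R \<open>f \<in> H\<close> \<open>?u \<in> H\<close>] is_RKHS_ip_commute[OF R \<open>f \<in> H\<close> \<open>g \<in> H\<close>]
      is_RKHS_ip_add[OF R \<open>f \<in> H\<close> tg \<open>f \<in> H\<close>] is_RKHS_ip_scale[OF R \<open>g \<in> H\<close> \<open>f \<in> H\<close>]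
    by simp
  also have "ip g ?u = ip f g + t * ip g g"
    using is_RKHS_ip_commute[OF R \<open>g \<in> H\<close> \<open>?u \<in> H\<close>] is_RKHS_ip_commute[OF R \<open>f \<in> H\<close> \<open>g \<in> H\<close>]
      is_RKHS_ip_add[OF R \<open>f \<in> H\<close> tg \<open>g \<in> H\<close>] is_RKHS_ip_scale[OF R \<open>g \<in> H\<close> \<open>g \<in> H\<close>]
    by simp
  finally show "0 \<le> ip f f + 2 * t * ip f g + t\<^sup>2 * ip g g"
    using is_RKHS_ip_nonneg[OF R \<open>?u \<in> H\<close>] by (simp add: algebra_simps power2_eq_square)
qed

lemma continuous_on_kernel_compose:
  fixes k :: "'a::metric_space \<Rightarrow> 'a \<Rightarrow> real"
  assumes "continuous_on UNIV (\<lambda>(x, y). k x y)" "continuous_on UNIV a" "continuous_on UNIV b"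
  shows "continuous_on UNIV (\<lambda>y. k (a y) (b y))"
  using continuous_on_compose[of UNIV "\<lambda>y. (a y, b y)" "\<lambda>(x, y). k x y"] assms
  by (auto simp: o_def intro: continuous_on_Pair continuous_on_subset)

lemma RKHS_diff_sq_le:
  assumes R: "is_RKHS k H ip" and "f \<in> H"
  shows "(f x - f y)\<^sup>2 \<le> ip f f * (k x x - k y x - (k x y - k y y))"
proof -
  define D where "D x y = (\<lambda>z. k x z + (-1) * k y z)" for x y
  have D: "D x y \<in> H" for x y
    unfolding D_def by (intro is_RKHS_add[OF R] is_RKHS_scale[OF R] is_RKHS_kernel_section[OF R])
  have eval_diff: "h x - h y = ip h (D x y)" if h: "h \<in> H" for h x y
  proof -
    have sections: "k x \<in> H" "k y \<in> H" "(\<lambda>z. (-1) * k y z) \<in> H"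
      using is_RKHS_kernel_section[OF R, of x] is_RKHS_kernel_section[OF R, of y]
        is_RKHS_scale[OF R is_RKHS_kernel_section[OF R, of y], of "-1"] by simp_all
    have "ip h (D x y) = ip (D x y) h"
      using is_RKHS_ip_commute[OF R h D] .
    also have "\<dots> = ip (k x) h + ip (\<lambda>z. (-1) * k y z) h"
      unfolding D_def using is_RKHS_ip_add[OF R sections(1,3) h] by simp
    also have "\<dots> = ip (k x) h - ip (k y) h"
      using is_RKHS_ip_scale[OF R sections(2) h, of "-1"] by simp
    also have "\<dots> = h x - h y"
      using is_RKHS_reproducing[OF R h] is_RKHS_ip_commute[OF R h] sections by simp
    finally show ?thesis
      by simp
  qed
  have "ip (D x y) (D x y) = k x x - k y x - (k x y - k y y)"
    using eval_diff[OF D, of x y x y] by (simp add: D_def)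
  with RKHS_Cauchy_Schwarz[OF R \<open>f \<in> H\<close> D[of x y]] show ?thesis
    by (simp add: eval_diff[OF \<open>f \<in> H\<close>])
qed

lemma RKHS_continuous:
  fixes k :: "'a::metric_space \<Rightarrow> 'a \<Rightarrow> real"
  assumes R: "is_RKHS k H ip" and k: "continuous_on UNIV (\<lambda>(x, y). k x y)" and "f \<in> H"
  shows "continuous_on UNIV f"
proof (intro continuous_at_imp_continuous_on ballI)
  fix x
  have "continuous_on UNIV (\<lambda>y. ip f f * (k x x - k y x - (k x y - k y y)))"
    by (intro continuous_intros continuous_on_kernel_compose[OF k])
  then have "isCont (\<lambda>y. ip f f * (k x x - k y x - (k x y - k y y))) x"
    by (simp add: continuous_on_eq_continuous_at)
  then have "((\<lambda>y. ip f f * (k x x - k y x - (k x y - k y y))) \<longlongrightarrow> 0) (at x)"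
    unfolding isCont_def by simp
  from tendsto_real_sqrt[OF this]
  have "((\<lambda>y. sqrt (ip f f * (k x x - k y x - (k x y - k y y)))) \<longlongrightarrow> 0) (at x)"
    by simp
  moreover have "norm (f y - f x) \<le> sqrt (ip f f * (k x x - k y x - (k x y - k y y)))" for y
    using real_sqrt_le_mono[OF RKHS_diff_sq_le[OF R \<open>f \<in> H\<close>, of x y]] by (simp add: abs_minus_commute)
  then have "\<forall>\<^sub>F y in at x. norm (f y - f x) \<le> sqrt (ip f f * (k x x - k y x - (k x y - k y y)))"
    by (intro always_eventually allI)
  ultimately have "((\<lambda>y. f y - f x) \<longlongrightarrow> 0) (at x)"
    by (rule Lim_null_comparison[rotated])
  then show "isCont f x"
    unfolding isCont_def by (rule LIM_zero_cancel)
qed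

lemma convex_mono_Lipschitz_below:
  fixes l :: "real \<Rightarrow> real"
  assumes "mono l" "convex_on UNIV l" "s \<le> b" "t \<le> b"
  shows "l t \<le> l s + (l (b + 1) - l b) * \<bar>t - s\<bar>"
proof (cases "s < t")
  case False
  have "0 \<le> (l (b + 1) - l b) * \<bar>t - s\<bar>"
    using monoD[OF assms(1), of b "b + 1"] by simp
  with False show ?thesis
    using monoD[OF assms(1), of t s] by simp
next
  case True
  \<comment> \<open>slopes of a convex function increase: \<open>slope(s,t) \<le> slope(t,b+1) \<le> slope(b,b+1)\<close>\<close>
  have "t < b + 1"
    using assms(4) by simp
  from convex_on_slope_le[OF assms(2) UNIV_I UNIV_I True this]
  have "(l s - l t) / (s - t) \<le> (l t - l (b + 1)) / (t - (b + 1))"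
    by linarith
  also have "\<dots> \<le> l (b + 1) - l b"
  proof (cases "t = b")
    case False
    with assms(4) have "t < b"
      by simp
    from convex_on_slope_le(2)[OF assms(2) UNIV_I UNIV_I this, of "b + 1"]
    show ?thesis
      by simp
  qed simp
  also have "(l s - l t) / (s - t) = (l t - l s) / (t - s)"
    by (metis minus_diff_eq minus_divide_divide)
  finally have "l t - l s \<le> (l (b + 1) - l b) * (t - s)"
    using True by (simp add: pos_divide_le_eq)
  with True show ?thesis
    by simp
qed

definition expected_loss :: "('a \<times> bool) measure \<Rightarrow> (real \<Rightarrow> real) \<Rightarrow> ('a \<Rightarrow> real) \<Rightarrow> real \<Rightarrow> ennreal"
  where "expected_loss P l f \<rho> = (\<integral>\<^sup>+z. ennreal (l (\<rho> - lab (snd z) * f (fst z))) \<partial>P)"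

lemma risk_eq_expected_loss: "risk P l f \<rho> = ereal (-2 * \<rho>) + enn2ereal (expected_loss P l f \<rho>)"
  by (simp add: risk_def expected_loss_def)

lemma abs_lab [simp]: "\<bar>lab b\<bar> = 1"
  by (simp add: lab_def)

lemma borel_measurable_loss:
  fixes P :: "('a::metric_space \<times> bool) measure"
  assumes "sets P = sets (borel \<Otimes>\<^sub>M count_space UNIV)" "mono l" "f \<in> borel_measurable borel"
  shows "(\<lambda>z. ennreal (l (\<rho> - lab (snd z) * f (fst z)))) \<in> borel_measurable P"
proof -
  have [measurable]: "l \<in> borel_measurable borel"
    using borel_measurable_mono[OF assms(2)] .
  have [measurable]: "lab \<in> borel_measurable (count_space UNIV)"
    by simp
  have "(\<lambda>z. ennreal (l (\<rho> - lab (snd z) * f (fst z)))) \<in> borel_measurable (borel \<Otimes>\<^sub>M count_space UNIV)"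
    using assms(3) by measurable
  then show ?thesis
    using measurable_cong_sets[OF assms(1) refl] by blast
qed

lemma loss_clip_le:
  fixes l :: "real \<Rightarrow> real"
  assumes "mono l" "\<And>z. l z \<ge> 0" "T \<ge> 0" "\<bar>y\<bar> = 1"
  shows "l (\<rho> - y * max (- T) (min T v)) \<le> l (\<rho> - y * v) + l \<rho> * indicator {x. T < \<bar>x\<bar>} v"
proof (cases "\<bar>v\<bar> \<le> T")
  case True
  then have "max (- T) (min T v) = v"
    by auto
  then show ?thesis
    using assms(2)[of \<rho>] by simp
next
  case False
  \<comment> \<open>a large margin \<open>y v\<close> is clipped down to \<open>T\<close>, costing at most \<open>l \<rho>\<close>; a very negative one is
    clipped up to \<open>-T\<close>, which only decreases the loss\<close>
  have y: "y = 1 \<or> y = -1"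
    using assms(4) by linarith
  have "l (\<rho> - y * max (- T) (min T v)) \<le> l \<rho> \<or> l (\<rho> - y * max (- T) (min T v)) \<le> l (\<rho> - y * v)"
  proof (cases "T < y * v")
    case True
    then have "y * max (- T) (min T v) = T"
      using y False assms(3) by auto
    then show ?thesis
      using monoD[OF assms(1), of "\<rho> - T" \<rho>] assms(3) by simp
  next
    case below: False
    then have "y * max (- T) (min T v) = - T" "y * v < - T"
      using y False assms(3) by auto
    then show ?thesis
      using monoD[OF assms(1), of "\<rho> + T" "\<rho> - y * v"] by simp
  qed
  moreover have "indicator {x. T < \<bar>x\<bar>} v = (1::real)"
    using False by (simp add: indicator_def)
  ultimately show ?thesis
    using assms(2)[of \<rho>] assms(2)[of "\<rho> - y * v"] by auto
qed

lemma loss_Lipschitz_le: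
  fixes l :: "real \<Rightarrow> real"
  assumes "mono l" "convex_on UNIV l" "\<bar>y\<bar> = 1" "\<bar>u\<bar> \<le> C" "\<bar>v\<bar> \<le> C"
  shows "l (\<rho> - y * v) \<le> l (\<rho> - y * u) + (l (\<rho> + C + 1) - l (\<rho> + C)) * \<bar>u - v\<bar>"
proof -
  have "\<bar>y * u\<bar> \<le> C" "\<bar>y * v\<bar> \<le> C"
    using assms(3-5) by (simp_all add: abs_mult)
  then have "l (\<rho> - y * v) \<le> l (\<rho> - y * u) + (l (\<rho> + C + 1) - l (\<rho> + C)) * \<bar>(\<rho> - y * v) - (\<rho> - y * u)\<bar>"
    by (intro convex_mono_Lipschitz_below[OF assms(1,2)]) (auto simp: algebra_simps)
  also have "\<bar>(\<rho> - y * v) - (\<rho> - y * u)\<bar> = \<bar>u - v\<bar>"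
    using assms(3) by (simp add: abs_mult right_diff_distrib[symmetric] abs_minus_commute)
  finally show ?thesis .
qed

lemma expected_loss_clip_le:
  fixes P :: "('a::metric_space \<times> bool) measure"
  assumes P: "sets P = sets (borel \<Otimes>\<^sub>M count_space UNIV)"
    and l: "mono l" "\<And>z. l z \<ge> 0" and f: "f \<in> borel_measurable borel" and "T \<ge> 0"
  shows "expected_loss P l (\<lambda>x. max (- T) (min T (f x))) \<rho>
    \<le> expected_loss P l f \<rho> + ennreal (l \<rho>) * emeasure (distr P borel fst) {x. T < \<bar>f x\<bar>}"
proof -
  have fst: "fst \<in> P \<rightarrow>\<^sub>M borel"
    by (simp add: measurable_cong_sets[OF P refl])
  have tail: "{x. T < \<bar>f x\<bar>} \<in> sets borel"
    using f by measurable
  have "expected_loss P l (\<lambda>x. max (- T) (min T (f x))) \<rho>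
      \<le> (\<integral>\<^sup>+z. ennreal (l (\<rho> - lab (snd z) * f (fst z))) + ennreal (l \<rho>) * indicator {x. T < \<bar>f x\<bar>} (fst z) \<partial>P)"
    unfolding expected_loss_def
  proof (intro nn_integral_mono)
    fix z :: "'a \<times> bool"
    have ind: "indicator {x. T < \<bar>x\<bar>} (f (fst z)) = (indicator {x. T < \<bar>f x\<bar>} (fst z) :: real)"
      by (simp add: indicator_def)
    have "ennreal (l (\<rho> - lab (snd z) * max (- T) (min T (f (fst z)))))
        \<le> ennreal (l (\<rho> - lab (snd z) * f (fst z)) + l \<rho> * indicator {x. T < \<bar>f x\<bar>} (fst z))"
      using loss_clip_le[OF l \<open>T \<ge> 0\<close> abs_lab, where v = "f (fst z)"] unfolding ind
      by (rule ennreal_leI)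
    also have "\<dots> = ennreal (l (\<rho> - lab (snd z) * f (fst z))) + ennreal (l \<rho>) * indicator {x. T < \<bar>f x\<bar>} (fst z)"
      using l(2) by (simp add: ennreal_plus ennreal_mult ennreal_indicator)
    finally show "ennreal (l (\<rho> - lab (snd z) * max (- T) (min T (f (fst z)))))
        \<le> ennreal (l (\<rho> - lab (snd z) * f (fst z))) + ennreal (l \<rho>) * indicator {x. T < \<bar>f x\<bar>} (fst z)" .
  qed
  also have "\<dots> = expected_loss P l f \<rho> + ennreal (l \<rho>) * (\<integral>\<^sup>+z. indicator {x. T < \<bar>f x\<bar>} (fst z) \<partial>P)"
    unfolding expected_loss_def using borel_measurable_loss[OF P l(1) f] tail fst
    by (subst nn_integral_add, simp_all, subst nn_integral_cmult) (auto intro: measurable_compose)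
  also have "(\<integral>\<^sup>+z. indicator {x. T < \<bar>f x\<bar>} (fst z) \<partial>P) = emeasure (distr P borel fst) {x. T < \<bar>f x\<bar>}"
    using tail fst by (simp add: nn_integral_distr[symmetric])
  finally show ?thesis .
qed

lemma expected_loss_Lipschitz:
  fixes P :: "('a::metric_space \<times> bool) measure"
  assumes P: "sets P = sets (borel \<Otimes>\<^sub>M count_space UNIV)"
    and l: "mono l" "convex_on UNIV l" "\<And>z. l z \<ge> 0"
    and u: "u \<in> borel_measurable borel" "\<And>x. \<bar>u x\<bar> \<le> C"
    and v: "v \<in> borel_measurable borel" "\<And>x. \<bar>v x\<bar> \<le> C"
  shows "expected_loss P l v \<rho> \<le> expected_loss P l u \<rho>
    + ennreal (l (\<rho> + C + 1) - l (\<rho> + C)) * (\<integral>\<^sup>+x. ennreal \<bar>u x - v x\<bar> \<partial>distr P borel fst)"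
proof -
  define L where "L = l (\<rho> + C + 1) - l (\<rho> + C)"
  have "L \<ge> 0"
    using monoD[OF l(1), of "\<rho> + C" "\<rho> + C + 1"] by (simp add: L_def)
  have fst: "fst \<in> P \<rightarrow>\<^sub>M borel"
    by (simp add: measurable_cong_sets[OF P refl])
  have "expected_loss P l v \<rho>
      \<le> (\<integral>\<^sup>+z. ennreal (l (\<rho> - lab (snd z) * u (fst z))) + ennreal L * ennreal \<bar>u (fst z) - v (fst z)\<bar> \<partial>P)"
    unfolding expected_loss_def
  proof (intro nn_integral_mono)
    fix z :: "'a \<times> bool"
    have "ennreal (l (\<rho> - lab (snd z) * v (fst z)))
        \<le> ennreal (l (\<rho> - lab (snd z) * u (fst z)) + L * \<bar>u (fst z) - v (fst z)\<bar>)"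
      unfolding L_def using loss_Lipschitz_le[OF l(1,2) abs_lab u(2) v(2)] by (rule ennreal_leI)
    also have "\<dots> = ennreal (l (\<rho> - lab (snd z) * u (fst z))) + ennreal L * ennreal \<bar>u (fst z) - v (fst z)\<bar>"
      using l(3) \<open>L \<ge> 0\<close> by (simp add: ennreal_plus ennreal_mult)
    finally show "ennreal (l (\<rho> - lab (snd z) * v (fst z)))
        \<le> ennreal (l (\<rho> - lab (snd z) * u (fst z))) + ennreal L * ennreal \<bar>u (fst z) - v (fst z)\<bar>" .
  qed
  also have "\<dots> = expected_loss P l u \<rho> + ennreal L * (\<integral>\<^sup>+z. ennreal \<bar>u (fst z) - v (fst z)\<bar> \<partial>P)"
    unfolding expected_loss_def using borel_measurable_loss[OF P l(1) u(1)] u(1) v(1) fst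
    by (subst nn_integral_add, simp_all, subst nn_integral_cmult) (auto intro: measurable_compose)
  also have "(\<integral>\<^sup>+z. ennreal \<bar>u (fst z) - v (fst z)\<bar> \<partial>P) = (\<integral>\<^sup>+x. ennreal \<bar>u x - v x\<bar> \<partial>distr P borel fst)"
    using u(1) v(1) fst by (subst nn_integral_distr) auto
  finally show ?thesis
    unfolding L_def .
qed

section \<open>Approximating the expected loss by functions in \<open>H\<close>\<close>

lemma measure_abs_gt_LIMSEQ_0:
  assumes "finite_measure M" "f \<in> borel_measurable M"
  shows "(\<lambda>n. measure M {x\<in>space M. real n < \<bar>f x\<bar>}) \<longlonglongrightarrow> 0"
proof -
  interpret finite_measure M by fact
  have "{x\<in>space M. real n < \<bar>f x\<bar>} \<in> sets M" for n
    using assms(2) by measurable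
  moreover have "decseq (\<lambda>n. {x\<in>space M. real n < \<bar>f x\<bar>})"
    unfolding decseq_def by auto
  moreover have "(\<Inter>n. {x\<in>space M. real n < \<bar>f x\<bar>}) = {}"
  proof (intro equals0I)
    fix x assume x: "x \<in> (\<Inter>n. {x\<in>space M. real n < \<bar>f x\<bar>})"
    obtain n where "\<bar>f x\<bar> < real n"
      using reals_Archimedean2 by blast
    moreover have "real n < \<bar>f x\<bar>"
      using x by blast
    ultimately show False
      by simp
  qed
  ultimately show ?thesis
    using finite_Lim_measure_decseq[of "\<lambda>n. {x\<in>space M. real n < \<bar>f x\<bar>}"] by (simp add: image_subset_iff)
qed

lemma universal_RKHS_L1_approx:
  fixes M :: "'a::metric_space measure"
  assumes "prob_space M" "sets M = sets borel" "universal_RKHS H"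
    and f: "f \<in> borel_measurable borel" "\<And>x. \<bar>f x\<bar> \<le> T" and "d > 0"
  obtains h where "h \<in> H" "\<And>x. \<bar>h x\<bar> \<le> T + 1" "(\<integral>\<^sup>+x. ennreal \<bar>f x - h x\<bar> \<partial>M) < ennreal d"
proof -
  interpret prob_space M by fact
  have "d / 2 > 0"
    using \<open>d > 0\<close> by simp
  then obtain g where g: "continuous_on UNIV g" "\<And>x. \<bar>g x\<bar> \<le> T"
      "(\<integral>\<^sup>+x. ennreal \<bar>f x - g x\<bar> \<partial>M) < ennreal (d / 2)"
    using bounded_L1_approx_by_bounded_continuous[OF finite_measure assms(2) f] by blast
  define \<delta> where "\<delta> = min 1 (d / 4)"
  have "\<delta> > 0" "\<delta> \<le> 1" "\<delta> < d / 2"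
    using \<open>d > 0\<close> by (simp_all add: \<delta>_def)
  from assms(3)[unfolded universal_RKHS_def, rule_format, OF g(1) \<open>\<delta> > 0\<close>]
  obtain h where "h \<in> H" and h: "\<And>x. \<bar>h x - g x\<bar> \<le> \<delta>"
    by blast
  have "\<bar>h x\<bar> \<le> T + 1" for x
    using h[of x] g(2)[of x] \<open>\<delta> \<le> 1\<close> by arith
  moreover have "(\<integral>\<^sup>+x. ennreal \<bar>f x - h x\<bar> \<partial>M) < ennreal d"
  proof -
    have "(\<integral>\<^sup>+x. ennreal \<bar>f x - h x\<bar> \<partial>M) \<le> (\<integral>\<^sup>+x. ennreal \<bar>f x - g x\<bar> + ennreal \<delta> \<partial>M)"
    proof (intro nn_integral_mono)
      fix x
      have "\<bar>f x - h x\<bar> \<le> \<bar>f x - g x\<bar> + \<delta>"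
        using h[of x] by linarith
      then show "ennreal \<bar>f x - h x\<bar> \<le> ennreal \<bar>f x - g x\<bar> + ennreal \<delta>"
        using \<open>\<delta> > 0\<close> by (simp add: ennreal_leI flip: ennreal_plus)
    qed
    also have "\<dots> = (\<integral>\<^sup>+x. ennreal \<bar>f x - g x\<bar> \<partial>M) + (\<integral>\<^sup>+x. ennreal \<delta> \<partial>M)"
      using g(1) by (intro nn_integral_add borel_measurable_abs_diff[OF assms(2) f(1)]
          borel_measurable_continuous_onI) auto
    also have "(\<integral>\<^sup>+x. ennreal \<delta> \<partial>M) = ennreal \<delta>"
      by (simp add: emeasure_space_1)
    also have "(\<integral>\<^sup>+x. ennreal \<bar>f x - g x\<bar> \<partial>M) + ennreal \<delta> < ennreal (d / 2 + d / 2)"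
      using g(3) \<open>\<delta> < d / 2\<close> \<open>d > 0\<close> by (intro add_mono_ennreal ennreal_lessI) auto
    finally show ?thesis
      by simp
  qed
  ultimately show ?thesis
    using \<open>h \<in> H\<close> that by blast
qed

lemma prob_space_marginal:
  fixes P :: "('a::metric_space \<times> bool) measure"
  assumes "prob_space P" "sets P = sets (borel \<Otimes>\<^sub>M count_space UNIV)"
  shows "prob_space (distr P borel fst)"
proof -
  have "fst \<in> P \<rightarrow>\<^sub>M borel"
    by (simp add: measurable_cong_sets[OF assms(2) refl])
  then show ?thesis
    by (rule prob_space.prob_space_distr[OF assms(1)])
qed

lemma small_tail_level:
  fixes M :: "'a::metric_space measure" and f :: "'a \<Rightarrow> real"
  assumes "finite_measure M" "sets M = sets borel" "f \<in> borel_measurable borel" "c \<ge> 0" "e > 0"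
  obtains T where "T \<ge> 0" "ennreal c * emeasure M {x. T < \<bar>f x\<bar>} \<le> ennreal e"
proof -
  interpret finite_measure M by fact
  have "space M = UNIV"
    using sets_eq_imp_space_eq[OF assms(2)] by simp
  have "(\<lambda>n. c * measure M {x\<in>space M. real n < \<bar>f x\<bar>}) \<longlonglongrightarrow> c * 0"
    using measure_abs_gt_LIMSEQ_0[OF assms(1)] assms(3)
    by (intro tendsto_mult tendsto_const) (simp add: measurable_cong_sets[OF assms(2) refl])
  then obtain n where "\<bar>c * measure M {x. real n < \<bar>f x\<bar>}\<bar> < e"
    using LIMSEQ_D[of _ 0 e] assms(5) \<open>space M = UNIV\<close> by (force simp: dist_real_def)
  with assms(4) show ?thesis
    by (intro that[of "real n"]) (simp_all add: emeasure_eq_measure ennreal_leI flip: ennreal_mult)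
qed

lemma expected_loss_RKHS_approx_bounded:
  fixes P :: "('a::metric_space \<times> bool) measure"
  assumes P: "prob_space P" "sets P = sets (borel \<Otimes>\<^sub>M count_space UNIV)"
    and H: "universal_RKHS H" "H \<subseteq> borel_measurable borel"
    and l: "mono l" "convex_on UNIV l" "\<And>z. l z \<ge> 0"
    and f: "f \<in> borel_measurable borel" "\<And>x. \<bar>f x\<bar> \<le> T" and "e > 0"
  obtains h where "h \<in> H" "expected_loss P l h \<rho> \<le> expected_loss P l f \<rho> + ennreal e"
proof -
  define L where "L = l (\<rho> + (T + 1) + 1) - l (\<rho> + (T + 1))"
  have "L \<ge> 0"
    using monoD[OF l(1)] by (simp add: L_def)
  obtain h where h: "h \<in> H" "\<And>x. \<bar>h x\<bar> \<le> T + 1"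
    "(\<integral>\<^sup>+x. ennreal \<bar>f x - h x\<bar> \<partial>distr P borel fst) < ennreal (e / (L + 1))"
    using universal_RKHS_L1_approx[OF prob_space_marginal[OF P] _ H(1) f, of "e / (L + 1)"] \<open>e > 0\<close> \<open>L \<ge> 0\<close>
    by auto
  have "\<bar>f x\<bar> \<le> T + 1" for x
    using f(2)[of x] by simp
  moreover have "h \<in> borel_measurable borel"
    using h(1) H(2) by blast
  ultimately have "expected_loss P l h \<rho>
      \<le> expected_loss P l f \<rho> + ennreal L * (\<integral>\<^sup>+x. ennreal \<bar>f x - h x\<bar> \<partial>distr P borel fst)"
    unfolding L_def using f(1) h(2) by (intro expected_loss_Lipschitz[OF P(2) l])
  also have "ennreal L * (\<integral>\<^sup>+x. ennreal \<bar>f x - h x\<bar> \<partial>distr P borel fst) \<le> ennreal L * ennreal (e / (L + 1))"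
    using h(3) by (intro mult_left_mono) auto
  also have "\<dots> = ennreal (e * (L / (L + 1)))"
    using \<open>L \<ge> 0\<close> \<open>e > 0\<close> by (simp add: field_simps flip: ennreal_mult)
  also have "\<dots> \<le> ennreal e"
    using \<open>L \<ge> 0\<close> \<open>e > 0\<close> by (intro ennreal_leI mult_left_le) auto
  finally show ?thesis
    using h(1) that by (auto intro: add_left_mono)
qed

lemma expected_loss_RKHS_approx:
  fixes P :: "('a::metric_space \<times> bool) measure"
  assumes P: "prob_space P" "sets P = sets (borel \<Otimes>\<^sub>M count_space UNIV)"
    and H: "universal_RKHS H" "H \<subseteq> borel_measurable borel"
    and l: "mono l" "convex_on UNIV l" "\<And>z. l z \<ge> 0"
    and f: "f \<in> borel_measurable borel" and "e > 0"
  obtains h where "h \<in> H" "expected_loss P l h \<rho> \<le> expected_loss P l f \<rho> + ennreal e"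
proof -
  obtain T where "T \<ge> 0" and tail: "ennreal (l \<rho>) * emeasure (distr P borel fst) {x. T < \<bar>f x\<bar>} \<le> ennreal (e / 2)"
    using small_tail_level[OF prob_space.finite_measure[OF prob_space_marginal[OF P]] _ f, of "l \<rho>" "e / 2"]
      l(3) \<open>e > 0\<close> by auto
  define fT where "fT x = max (- T) (min T (f x))" for x
  have fT: "fT \<in> borel_measurable borel" "\<And>x. \<bar>fT x\<bar> \<le> T"
    unfolding fT_def using f \<open>T \<ge> 0\<close> by auto
  obtain h where "h \<in> H" "expected_loss P l h \<rho> \<le> expected_loss P l fT \<rho> + ennreal (e / 2)"
    using expected_loss_RKHS_approx_bounded[OF P H l fT, of "e / 2"] \<open>e > 0\<close> by auto
  moreover have "expected_loss P l fT \<rho> \<le> expected_loss P l f \<rho> + ennreal (e / 2)"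
    using expected_loss_clip_le[OF P(2) l(1,3) f \<open>T \<ge> 0\<close>, of \<rho>] tail unfolding fT_def
    by (auto elim!: order_trans intro: add_left_mono)
  ultimately have "expected_loss P l h \<rho> \<le> expected_loss P l f \<rho> + ennreal (e / 2) + ennreal (e / 2)"
    by (auto elim!: order_trans intro: add_right_mono)
  also have "\<dots> = expected_loss P l f \<rho> + ennreal e"
    using \<open>e > 0\<close> by (simp add: add.assoc flip: ennreal_plus)
  finally show ?thesis
    using \<open>h \<in> H\<close> that by blast
qed

section \<open>Infima of the risk\<close>

lemma risk_le_if_expected_loss_le:
  assumes "expected_loss P l h \<rho> \<le> expected_loss P l f \<rho> + ennreal e" "e \<ge> 0"
  shows "risk P l h \<rho> \<le> risk P l f \<rho> + ereal e"
proof -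
  have "enn2ereal (expected_loss P l h \<rho>) \<le> enn2ereal (expected_loss P l f \<rho>) + ereal e"
    using assms by (simp add: less_eq_ennreal.rep_eq plus_ennreal.rep_eq)
  then show ?thesis
    unfolding risk_eq_expected_loss by (simp add: add.assoc add_left_mono)
qed

lemma Inf_eq_if_approximating_subset:
  fixes A B :: "ereal set"
  assumes "A \<subseteq> B" and approx: "\<And>b e. b \<in> B \<Longrightarrow> e > 0 \<Longrightarrow> \<exists>a\<in>A. a \<le> b + ereal e"
  shows "Inf A = Inf B"
proof (rule antisym)
  show "Inf A \<le> Inf B"
  proof (rule Inf_greatest)
    fix b assume "b \<in> B"
    show "Inf A \<le> b"
    proof (rule ereal_le_epsilon2)
      fix e :: real assume "e > 0"
      with approx \<open>b \<in> B\<close> obtain a where "a \<in> A" "a \<le> b + ereal e"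
        by blast
      then show "Inf A \<le> b + ereal e"
        using Inf_lower order_trans by blast
    qed
  qed
qed (rule Inf_superset_mono[OF assms(1)])

lemma Inf_risk_eq_Inf_risk_borel:
  assumes "H \<subseteq> borel_measurable borel"
    and dense: "\<And>f \<rho> e. f \<in> borel_measurable borel \<Longrightarrow> e > 0 \<Longrightarrow>
      \<exists>h\<in>H. expected_loss P l h \<rho> \<le> expected_loss P l f \<rho> + ennreal e"
  shows "Inf {risk P l f \<rho> | f \<rho>. f \<in> H} = Inf {risk P l f \<rho> | f \<rho>. f \<in> borel_measurable borel}"
proof (rule Inf_eq_if_approximating_subset)
  show "{risk P l f \<rho> | f \<rho>. f \<in> H} \<subseteq> {risk P l f \<rho> | f \<rho>. f \<in> borel_measurable borel}"
    using assms(1) by blast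
  fix b and e :: real assume "b \<in> {risk P l f \<rho> | f \<rho>. f \<in> borel_measurable borel}" "e > 0"
  then obtain f \<rho> where "b = risk P l f \<rho>" "f \<in> borel_measurable borel"
    by blast
  with dense[OF _ \<open>e > 0\<close>] obtain h where "h \<in> H" "expected_loss P l h \<rho> \<le> expected_loss P l f \<rho> + ennreal e"
    by blast
  then have "risk P l h \<rho> \<le> b + ereal e"
    unfolding \<open>b = _\<close> using \<open>e > 0\<close> by (intro risk_le_if_expected_loss_le) auto
  with \<open>h \<in> H\<close> show "\<exists>a\<in>{risk P l f \<rho> | f \<rho>. f \<in> H}. a \<le> b + ereal e"
    by blast
qed

lemma reg_risk_eq_risk: "ip f f \<le> lam\<^sup>2 \<Longrightarrow> reg_risk P l ip lam f \<rho> = risk P l f \<rho>"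
  by (simp add: reg_risk_def theta_def)

lemma risk_le_reg_risk: "risk P l f \<rho> \<le> reg_risk P l ip lam f \<rho>"
  by (simp add: reg_risk_def theta_def)

lemma Inf_reg_risk_tendsto_Inf_risk:
  "((\<lambda>lam. Inf {reg_risk P l ip lam f \<rho> | f \<rho>. f \<in> H}) \<longlongrightarrow> Inf {risk P l f \<rho> | f \<rho>. f \<in> H}) at_top"
proof (rule order_tendstoI)
  fix a assume "a < Inf {risk P l f \<rho> | f \<rho>. f \<in> H}"
  moreover have "Inf {risk P l f \<rho> | f \<rho>. f \<in> H} \<le> Inf {reg_risk P l ip lam f \<rho> | f \<rho>. f \<in> H}" for lam
    using risk_le_reg_risk by (force intro!: Inf_mono)
  ultimately show "\<forall>\<^sub>F lam in at_top. a < Inf {reg_risk P l ip lam f \<rho> | f \<rho>. f \<in> H}"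
    by (intro always_eventually allI) (rule less_le_trans)
next
  fix b assume "Inf {risk P l f \<rho> | f \<rho>. f \<in> H} < b"
  then obtain h \<rho> where "h \<in> H" "risk P l h \<rho> < b"
    unfolding Inf_less_iff by blast
  show "\<forall>\<^sub>F lam in at_top. Inf {reg_risk P l ip lam f \<rho> | f \<rho>. f \<in> H} < b"
  proof (rule eventually_at_top_linorderI)
    fix lam :: real assume "lam \<ge> \<bar>ip h h\<bar> + 1"
    then have "ip h h \<le> lam\<^sup>2"
      by (smt (verit) power2_eq_square mult_le_cancel_left1)
    have "Inf {reg_risk P l ip lam f \<rho> | f \<rho>. f \<in> H} \<le> reg_risk P l ip lam h \<rho>"
      using \<open>h \<in> H\<close> by (intro Inf_lower) blast
    also have "\<dots> = risk P l h \<rho>"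
      using \<open>ip h h \<le> lam\<^sup>2\<close> by (rule reg_risk_eq_risk[where ip = ip and f = h])
    also note \<open>risk P l h \<rho> < b\<close>
    finally show "Inf {reg_risk P l ip lam f \<rho> | f \<rho>. f \<in> H} < b" .
  qed
qed

theorem lemma3:
  fixes k :: "'a::metric_space \<Rightarrow> 'a \<Rightarrow> real"
    and H :: "('a \<Rightarrow> real) set"
    and ip :: "('a \<Rightarrow> real) \<Rightarrow> ('a \<Rightarrow> real) \<Rightarrow> real"
    and K :: real
    and P :: "('a \<times> bool) measure"
    and \<eta> :: "'a \<Rightarrow> real"
    and \<epsilon> :: real
    and l :: "real \<Rightarrow> real"
  assumes "compact (UNIV :: 'a set)"
    and "is_kernel k"
    and "continuous_on UNIV (\<lambda>(x, y). k x y)"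
    and "is_RKHS k H ip"
    and "universal_RKHS H"
    and "\<forall>x. sqrt (k x x) \<le> K"
    and "prob_space P"
    and "sets P = sets (borel \<Otimes>\<^sub>M count_space UNIV)"
    and "\<eta> \<in> borel_measurable borel"
    and "\<forall>A\<in>sets borel. measure P (A \<times> {True}) = (LINT x:A|distr P borel fst. \<eta> x)"
    and "\<epsilon> > 0"
    and "measure (distr P borel fst) {x. \<epsilon> \<le> \<eta> x \<and> \<eta> x \<le> 1 - \<epsilon>} > 0"
    and "mono l"
    and "convex_on UNIV l"
    and "\<forall>z. l z \<ge> 0"
    and "\<forall>M>0. \<exists>z0. \<forall>z\<ge>z0. \<forall>g\<in>subdiff l z. g \<ge> M"
  shows "((\<lambda>lam. Inf {reg_risk P l ip lam f \<rho> | f \<rho>. f \<in> H})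
           \<longlongrightarrow> Inf {risk P l f \<rho> | f \<rho>. f \<in> borel_measurable borel}) at_top"
proof -
  have H_borel: "H \<subseteq> borel_measurable borel"
    using RKHS_continuous[OF assms(4,3)] by (auto intro: borel_measurable_continuous_onI)
  have "\<exists>h\<in>H. expected_loss P l h \<rho> \<le> expected_loss P l f \<rho> + ennreal e"
    if "f \<in> borel_measurable borel" "e > 0" for f \<rho> e
    using expected_loss_RKHS_approx[OF assms(7,8,5) H_borel assms(13,14) _ that] assms(15) by metis
  then have "Inf {risk P l f \<rho> | f \<rho>. f \<in> H} = Inf {risk P l f \<rho> | f \<rho>. f \<in> borel_measurable borel}"
    by (rule Inf_risk_eq_Inf_risk_borel[OF H_borel])
  then show ?thesis
    using Inf_reg_risk_tendsto_Inf_risk[of P l ip H] by simp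
qed

end
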